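(* Let $m\ge n$ be positive integers, $\pi$ uniform on $S_{n+m}$, and $\mathbf L=(l_1,\dots,l_n)$ a fixed $n$-tuple of distinct elements of $[m]$. For $i\in[n]$ let $$d_i=\mathbb 1\{\pi(i)\in[n],\ \pi(n+l_i)\in[n+m]\setminus[n]\}-\mathbb 1\{\pi(i)\in[n+m]\setminus[n],\ \pi(n+l_i)\in[n]\}.$$ Then $\sum_{i=1}^n d_i$ has mean zero and is $\mathrm{SG}(2n)$.
   Context: $S_{n+m}$ is the symmetric group on $[n+m]=\{1,\dots,n+m\}$. A real random variable $X$ is $\mathrm{SG}(\sigma^2)$ if $\mathbb E[\exp\{\lambda(X-\mathbb EX)\}]\le\exp(\lambda^2\sigma^2/2)$ for all $\lambda\in\mathbb R$. *)

theory Defs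
  imports "HOL-Probability.Probability" "HOL-Combinatorics.Permutations"
begin

definition subgaussian_pmf :: "'a pmf \<Rightarrow> ('a \<Rightarrow> real) \<Rightarrow> real \<Rightarrow> bool" where
  "subgaussian_pmf p X sigma2 \<longleftrightarrow>
     (\<forall>lam::real. measure_pmf.expectation p (\<lambda>x. exp (lam * (X x - measure_pmf.expectation p X)))
                   \<le> exp (lam^2 * sigma2 / 2))"

definition uniform_perm :: "nat \<Rightarrow> (nat \<Rightarrow> nat) pmf" where
  "uniform_perm N = pmf_of_set {p. p permutes {1..N}}"

definition d_term :: "nat \<Rightarrow> nat \<Rightarrow> (nat \<Rightarrow> nat) \<Rightarrow> (nat \<Rightarrow> nat) \<Rightarrow> nat \<Rightarrow> real" where
  "d_term n m l \<pi> i =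
     (if \<pi> i \<in> {1..n} \<and> \<pi> (n + l i) \<in> {1..n+m} - {1..n} then 1 else 0)
   - (if \<pi> i \<in> {1..n+m} - {1..n} \<and> \<pi> (n + l i) \<in> {1..n} then 1 else 0)"

end

theory Submission
  imports Defs
begin

text \<open>For every set A of indices, precomposing \<pi> with the involution that swaps i and n + l i
  for i \<in> A preserves the uniform distribution on permutations and flips the signs of exactly
  the d_i with i \<in> A. Averaging over all 2^n choices of A therefore bounds the moment generating
  function of the sum by that of a sum of n independent Rademacher signs weighted by |d_i| \<le> 1,
  i.e. by cosh(\<lambda>)^n \<le> exp(n \<lambda>^2 / 2); taking A = [n] shows that the mean is zero.\<close>

lemma sinh_le_mult_cosh:
  fixes x :: real
  assumes "0 \<le> x"
  shows "sinh x \<le> x * cosh x"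
proof -
  have "0 * cosh 0 - sinh (0::real) \<le> x * cosh x - sinh x"
  proof (rule DERIV_nonneg_imp_nondecreasing[OF assms])
    fix t :: real assume "0 \<le> t" "t \<le> x"
    have "((\<lambda>x. x * cosh x - sinh x) has_real_derivative t * sinh t) (at t)"
      by (auto intro!: derivative_eq_intros)
    with \<open>0 \<le> t\<close> show "\<exists>y. ((\<lambda>x. x * cosh x - sinh x) has_real_derivative y) (at t) \<and> 0 \<le> y"
      by force
  qed
  then show ?thesis by simp
qed

lemma cosh_le_exp_half_square:
  fixes x :: real
  shows "cosh x \<le> exp (x\<^sup>2 / 2)"
proof -
  have "cosh y * exp (- y\<^sup>2 / 2) \<le> 1" if "0 \<le> y" for y :: real
  proof -
    have "cosh y * exp (- y\<^sup>2 / 2) \<le> cosh 0 * exp (- 0\<^sup>2 / 2)"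
    proof (rule DERIV_nonpos_imp_nonincreasing[OF that])
      fix t :: real assume "0 \<le> t" "t \<le> y"
      have "((\<lambda>x. cosh x * exp (- x\<^sup>2 / 2)) has_real_derivative
              exp (- t\<^sup>2 / 2) * (sinh t - t * cosh t)) (at t)"
        by (auto intro!: derivative_eq_intros simp: algebra_simps)
      moreover have "exp (- t\<^sup>2 / 2) * (sinh t - t * cosh t) \<le> 0"
        using sinh_le_mult_cosh[OF \<open>0 \<le> t\<close>] by (simp add: mult_nonneg_nonpos)
      ultimately show "\<exists>d. ((\<lambda>x. cosh x * exp (- x\<^sup>2 / 2)) has_real_derivative d) (at t) \<and> d \<le> 0"
        by blast
    qed
    then show ?thesis by simp
  qed
  from this[of "\<bar>x\<bar>"] have "cosh x * exp (- x\<^sup>2 / 2) \<le> 1" by simp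
  then show ?thesis by (simp add: exp_minus field_simps)
qed

lemma exp_plus_exp_minus_le:
  fixes x t :: real
  assumes "\<bar>x\<bar> \<le> t"
  shows "exp (- x) + exp x \<le> 2 * exp (t\<^sup>2 / 2)"
proof -
  have "x\<^sup>2 \<le> t\<^sup>2"
    using assms by (metis abs_ge_zero power2_abs power_mono)
  then have "cosh x \<le> exp (t\<^sup>2 / 2)"
    using cosh_le_exp_half_square[of x] by (simp add: order_trans)
  then show ?thesis by (simp add: cosh_def)
qed

lemma sum_Pow_exp_sign_flips_le:
  fixes c :: "'i \<Rightarrow> real"
  assumes "finite I" and "\<And>i. i \<in> I \<Longrightarrow> \<bar>c i\<bar> \<le> t"
  shows "(\<Sum>A\<in>Pow I. exp (\<Sum>i\<in>I. if i \<in> A then - c i else c i))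
           \<le> (2 * exp (t\<^sup>2 / 2)) ^ card I"
proof -
  have "exp (\<Sum>i\<in>I. if i \<in> A then - c i else c i)
          = (\<Prod>i\<in>A. exp (- c i)) * (\<Prod>i\<in>I - A. exp (c i))" if "A \<subseteq> I" for A
  proof -
    have "exp (\<Sum>i\<in>I. if i \<in> A then - c i else c i)
            = (\<Prod>i\<in>I. exp (if i \<in> A then - c i else c i))"
      by (simp add: exp_sum \<open>finite I\<close>)
    also have "\<dots> = (\<Prod>i\<in>A. exp (if i \<in> A then - c i else c i))
                      * (\<Prod>i\<in>I - A. exp (if i \<in> A then - c i else c i))"
      by (simp add: prod.subset_diff[OF that \<open>finite I\<close>] mult.commute)
    also have "\<dots> = (\<Prod>i\<in>A. exp (- c i)) * (\<Prod>i\<in>I - A. exp (c i))"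
      by (intro arg_cong2[where f = "(*)"] prod.cong) auto
    finally show ?thesis .
  qed
  then have "(\<Sum>A\<in>Pow I. exp (\<Sum>i\<in>I. if i \<in> A then - c i else c i))
               = (\<Prod>i\<in>I. exp (- c i) + exp (c i))"
    by (simp add: prod_add[OF \<open>finite I\<close>])
  also have "\<dots> \<le> (\<Prod>i\<in>I. 2 * exp (t\<^sup>2 / 2))"
    by (intro prod_mono conjI add_nonneg_nonneg exp_plus_exp_minus_le assms) simp_all
  finally show ?thesis by simp
qed

lemma subgaussian_pmf_mono:
  assumes "subgaussian_pmf p X s" "s \<le> t"
  shows "subgaussian_pmf p X t"
  unfolding subgaussian_pmf_def
proof
  fix lam :: real
  have "lam\<^sup>2 * s / 2 \<le> lam\<^sup>2 * t / 2"
    using assms(2) by (simp add: mult_left_mono divide_right_mono)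
  then show "measure_pmf.expectation p (\<lambda>x. exp (lam * (X x - measure_pmf.expectation p X)))
               \<le> exp (lam\<^sup>2 * t / 2)"
    using assms(1) unfolding subgaussian_pmf_def by (meson exp_le_cancel_iff order_trans)
qed

definition swap_along :: "('a \<Rightarrow> 'a) \<Rightarrow> 'a set \<Rightarrow> 'a \<Rightarrow> 'a" where
  "swap_along f A x =
     (if x \<in> A then f x else if x \<in> f ` A then the_inv_into A f x else x)"

lemma swap_along_apply: "x \<in> A \<Longrightarrow> swap_along f A x = f x"
  by (simp add: swap_along_def)

lemma swap_along_apply_image:
  assumes "inj_on f A" "A \<inter> f ` A = {}" "x \<in> A"
  shows "swap_along f A (f x) = x"
  using assms by (auto simp: swap_along_def the_inv_into_f_f)

lemma swap_along_fixes: "x \<notin> A \<Longrightarrow> x \<notin> f ` A \<Longrightarrow> swap_along f A x = x"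
  by (simp add: swap_along_def)

lemma swap_along_swap_along:
  assumes "inj_on f A" "A \<inter> f ` A = {}"
  shows "swap_along f A (swap_along f A x) = x"
proof -
  consider "x \<in> A" | a where "a \<in> A" "x = f a" | "x \<notin> A" "x \<notin> f ` A"
    by blast
  then show ?thesis
    by cases (use assms in \<open>simp_all add: swap_along_apply swap_along_apply_image swap_along_fixes\<close>)
qed

lemma swap_along_permutes:
  assumes "inj_on f A" "A \<inter> f ` A = {}" "A \<union> f ` A \<subseteq> S"
  shows "swap_along f A permutes S"
  unfolding permutes_def
proof (intro conjI allI impI)
  fix x assume "x \<notin> S"
  with assms(3) show "swap_along f A x = x" by (auto intro: swap_along_fixes)
next
  fix y
  show "\<exists>!x. swap_along f A x = y"
    by (metis swap_along_swap_along[OF assms(1,2)])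
qed

lemma bij_betw_compose_involution_permutations:
  assumes "\<sigma> permutes S" "\<And>x. \<sigma> (\<sigma> x) = x"
  shows "bij_betw (\<lambda>\<pi>. \<pi> \<circ> \<sigma>) {\<pi>. \<pi> permutes S} {\<pi>. \<pi> permutes S}"
  by (rule bij_betw_byWitness[where f' = "\<lambda>\<pi>. \<pi> \<circ> \<sigma>"])
     (use assms in \<open>auto simp: permutes_compose\<close>)

lemma symmetric_sum_subgaussian:
  fixes P :: "'a set" and I :: "'i set" and d :: "'a \<Rightarrow> 'i \<Rightarrow> real"
    and h :: "'i set \<Rightarrow> 'a \<Rightarrow> 'a"
  assumes "finite P" "P \<noteq> {}" "finite I"
    and bij: "\<And>A. A \<subseteq> I \<Longrightarrow> bij_betw (h A) P P"
    and flip: "\<And>A p i. A \<subseteq> I \<Longrightarrow> p \<in> P \<Longrightarrow> i \<in> I \<Longrightarrow>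
                  d (h A p) i = (if i \<in> A then - d p i else d p i)"
    and bounded: "\<And>i p. i \<in> I \<Longrightarrow> p \<in> P \<Longrightarrow> \<bar>d p i\<bar> \<le> 1"
  shows "measure_pmf.expectation (pmf_of_set P) (\<lambda>p. \<Sum>i\<in>I. d p i) = 0"
    and "subgaussian_pmf (pmf_of_set P) (\<lambda>p. \<Sum>i\<in>I. d p i) (card I)"
proof -
  define S where "S p = (\<Sum>i\<in>I. d p i)" for p
  have expectation: "measure_pmf.expectation (pmf_of_set P) f = sum f P / card P"
    for f :: "'a \<Rightarrow> real"
    by (rule integral_pmf_of_set[OF \<open>P \<noteq> {}\<close> \<open>finite P\<close>])
  have reindex: "sum f P = (\<Sum>p\<in>P. f (h A p))" if "A \<subseteq> I" for A and f :: "'a \<Rightarrow> real"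
    using sum.reindex_bij_betw[OF bij[OF that], of f] by simp
  have S_flip: "S (h A p) = (\<Sum>i\<in>I. if i \<in> A then - d p i else d p i)"
    if "A \<subseteq> I" "p \<in> P" for A p
    unfolding S_def using flip[OF that] by (intro sum.cong) auto
  have "sum S P = (\<Sum>p\<in>P. S (h I p))"
    by (rule reindex) simp
  also have "\<dots> = (\<Sum>p\<in>P. - S p)"
    by (intro sum.cong refl) (simp add: S_flip, simp add: S_def sum_negf)
  finally have "sum S P = 0"
    by (simp add: sum_negf)
  then show mean: "measure_pmf.expectation (pmf_of_set P) (\<lambda>p. \<Sum>i\<in>I. d p i) = 0"
    by (simp add: expectation S_def[symmetric])
  have "sum (\<lambda>p. exp (lam * S p)) P / card P \<le> exp (lam\<^sup>2 * card I / 2)" for lam :: real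
  proof -
    have "2 ^ card I * (\<Sum>p\<in>P. exp (lam * S p)) = (\<Sum>A\<in>Pow I. \<Sum>p\<in>P. exp (lam * S p))"
      by (simp add: card_Pow \<open>finite I\<close>)
    also have "\<dots> = (\<Sum>A\<in>Pow I. \<Sum>p\<in>P. exp (lam * S (h A p)))"
      by (intro sum.cong refl reindex) simp
    also have "\<dots> = (\<Sum>p\<in>P. \<Sum>A\<in>Pow I.
                          exp (\<Sum>i\<in>I. if i \<in> A then - (lam * d p i) else lam * d p i))"
      by (subst sum.swap) (auto intro!: sum.cong simp: S_flip sum_distrib_left)
    also have "\<dots> \<le> (\<Sum>p\<in>P. (2 * exp (\<bar>lam\<bar>\<^sup>2 / 2)) ^ card I)"
      by (intro sum_mono sum_Pow_exp_sign_flips_le \<open>finite I\<close>)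
         (auto simp: abs_mult intro: mult_left_le bounded)
    also have "\<dots> = 2 ^ card I * (card P * exp (lam\<^sup>2 * card I / 2))"
      by (simp add: power_mult_distrib exp_of_nat_mult[symmetric] algebra_simps)
    finally show ?thesis
      using \<open>finite P\<close> \<open>P \<noteq> {}\<close> by (simp add: divide_le_eq card_gt_0_iff mult.commute)
  qed
  then show "subgaussian_pmf (pmf_of_set P) (\<lambda>p. \<Sum>i\<in>I. d p i) (card I)"
    unfolding subgaussian_pmf_def mean by (simp add: expectation S_def)
qed

context
  fixes n m :: nat and l :: "nat \<Rightarrow> nat"
  assumes l_inj: "inj_on l {1..n}" and l_range: "l ` {1..n} \<subseteq> {1..m}"
begin

lemma shift_index_inj_disjoint:
  assumes "A \<subseteq> {1..n}"
  shows "inj_on (\<lambda>i. n + l i) A" "A \<inter> (\<lambda>i. n + l i) ` A = {}"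
    and "A \<union> (\<lambda>i. n + l i) ` A \<subseteq> {1..n + m}"
proof -
  show "inj_on (\<lambda>i. n + l i) A"
    using inj_on_subset[OF l_inj assms] by (simp add: inj_on_def)
  have "l i \<in> {1..m}" if "i \<in> A" for i
    using that assms l_range by blast
  then show "A \<inter> (\<lambda>i. n + l i) ` A = {}" "A \<union> (\<lambda>i. n + l i) ` A \<subseteq> {1..n + m}"
    using assms by fastforce+
qed

lemma d_term_swap_along:
  assumes "A \<subseteq> {1..n}" "i \<in> {1..n}"
  shows "d_term n m l (\<pi> \<circ> swap_along (\<lambda>i. n + l i) A) i
           = (if i \<in> A then - d_term n m l \<pi> i else d_term n m l \<pi> i)"
proof (cases "i \<in> A")
  case True
  note shift = shift_index_inj_disjoint[OF assms(1)]
  have "swap_along (\<lambda>i. n + l i) A i = n + l i" "swap_along (\<lambda>i. n + l i) A (n + l i) = i"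
    using True swap_along_apply_image[OF shift(1,2) True] by (simp_all add: swap_along_apply)
  then show ?thesis
    using True by (simp add: d_term_def conj_commute)
next
  case False
  have "n + l i \<notin> (\<lambda>i. n + l i) ` A"
  proof
    assume "n + l i \<in> (\<lambda>i. n + l i) ` A"
    then obtain j where "j \<in> A" "l i = l j" by auto
    with assms l_inj have "i = j" by (auto dest: inj_onD)
    with False \<open>j \<in> A\<close> show False by simp
  qed
  moreover have "l ` A \<subseteq> {1..m}" "l i \<in> {1..m}"
    using assms l_range by blast+
  then have "i \<notin> (\<lambda>i. n + l i) ` A" "n + l i \<notin> A"
    using assms by force+
  ultimately show ?thesis
    using False by (simp add: d_term_def swap_along_fixes)
qed

end

theorem mainTheorem12:
  fixes n m :: nat and l :: "nat \<Rightarrow> nat"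
  assumes "1 \<le> n" and "n \<le> m"
    and "inj_on l {1..n}" and "l ` {1..n} \<subseteq> {1..m}"
  shows "measure_pmf.expectation (uniform_perm (n + m)) (\<lambda>\<pi>. \<Sum>i\<in>{1..n}. d_term n m l \<pi> i) = 0
       \<and> subgaussian_pmf (uniform_perm (n + m)) (\<lambda>\<pi>. \<Sum>i\<in>{1..n}. d_term n m l \<pi> i) (2 * real n)"
proof -
  let ?P = "{\<pi>. \<pi> permutes {1..n + m}}"
  define h where "h A \<pi> = \<pi> \<circ> swap_along (\<lambda>i. n + l i) A" for A and \<pi> :: "nat \<Rightarrow> nat"
  have bij: "bij_betw (h A) ?P ?P" if "A \<subseteq> {1..n}" for A
    unfolding h_def using shift_index_inj_disjoint[OF assms(3,4) that]
    by (intro bij_betw_compose_involution_permutations swap_along_permutes swap_along_swap_along)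
  have flip: "d_term n m l (h A \<pi>) i = (if i \<in> A then - d_term n m l \<pi> i else d_term n m l \<pi> i)"
    if "A \<subseteq> {1..n}" "i \<in> {1..n}" for A \<pi> i
    unfolding h_def using d_term_swap_along[OF assms(3,4) that] .
  have bounded: "\<bar>d_term n m l \<pi> i\<bar> \<le> 1" for \<pi> i
    by (simp add: d_term_def)
  have "finite ?P" "?P \<noteq> {}"
    using finite_permutations permutes_id by blast+
  then have "measure_pmf.expectation (pmf_of_set ?P) (\<lambda>\<pi>. \<Sum>i\<in>{1..n}. d_term n m l \<pi> i) = 0"
    "subgaussian_pmf (pmf_of_set ?P) (\<lambda>\<pi>. \<Sum>i\<in>{1..n}. d_term n m l \<pi> i) (card {1..n})"
    by (rule symmetric_sum_subgaussian[where h = h]; blast intro: bij flip bounded)+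
  then show ?thesis
    unfolding uniform_perm_def by (auto elim: subgaussian_pmf_mono)
qed

end
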